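(* There is an absolute constant $C$ such that for every integer $r\ge 10$ there exists an integer $d\le C r^4\log r$ (i.e. $d\in O(r^4\log r)$) such that the following holds for every integer $k\ge 1$. Let $G$ be a $k\times k$ pseudogrid with grid-partition $\mathcal{P}:=\{V(P_\mu):\mu\in\mathrm{VE}(G_k)\}$ and let $\varphi$ be a vertex colouring of $G$ such that for every $A\subseteq\varphi(V(G))$, $|\varphi_{\mathcal{P}}^{-1}(A)\cap\mathrm{VE}(\mathrm{int}_r(G_k))|\ge d|A|$. Then there exists $S\subseteq\mathrm{int}_r(G)$ such that (i) $|\varphi^{-1}(\alpha)\cap S|=2$ for each $\alpha\in\varphi(V(G))$; and (ii) $|\tilde{B}_r(v)\cap S|\le 2$ for each $v\in S$.
   Context: The grid $G_k$ has vertex set $\{1,\dots,k\}^2$, with $(i_1,j_1)$ and $(i_2,j_2)$ adjacent iff $|i_1-i_2|+|j_1-j_2|=1$. For a graph $H$, $\mathrm{VE}(H):=V(H)\cup E(H)$. A $k\times k$ pseudogrid is any graph obtained from $G_k$ as follows: each edge $vw$ is replaced by a path $\overline{P}_{vw}$ with endpoints $v,w$ (subdividing $vw$ zero or more times); each vertex $v=(i,j)$ of degree $4$ is replaced by a nonempty path $P_v$: if $P_v$ has one vertex it plays the role of $v$; otherwise its endpoints $p,q$ are attached, $p$ to the paths $\overline{P}_{vw}$ towards two of the grid neighbours of $v$ and $q$ to the other two, in one of the patterns (Q1) $p$: $(i-1,j),(i,j-1)$, $q$: $(i+1,j),(i,j+1)$; (Q2) $p$: $(i,j+1),(i-1,j)$,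 $q$: $(i,j-1),(i+1,j)$; (Q3) $p$: $(i-1,j),(i+1,j)$, $q$: $(i,j-1),(i,j+1)$. For each grid edge $vw$, $P_{vw}$ is the (possibly empty) path of internal vertices of $\overline{P}_{vw}$; for each grid vertex $v$ of degree less than $4$, $P_v$ is the one-vertex path on $v$; $\{V(P_\mu):\mu\in\mathrm{VE}(G_k)\}$ is the grid-partition. $\mathrm{int}_r(G_k)$ is the subgraph of $G_k$ induced on $\{1+r,\dots,k-r\}^2$, and $\mathrm{int}_r(G):=\bigcup_{\mu\in\mathrm{VE}(\mathrm{int}_r(G_k))}V(P_\mu)$. Boxes: for a vertex $v=(i,j)$ of $G_k$, $B_r(v):=(\{i-r,\dots,i+r\}\times\{j-r,\dots,j+r\})\cap V(G_k)$; for an edge $vw$, $B_r(vw):=B_r(v)\cup B_r(w)$; $G_r(\mu):=G_k[B_r(\mu)]$; $\tilde{B}_r(\mu):=\bigcup_{\nu\in\mathrm{VE}(G_r(\mu))}V(P_\nu)$; for $v\in V(G)$, $\tilde{B}_r(v):=\tilde{B}_r(\mu_v)$ where $\mu_v$ is the unique object with $v\in V(P_{\mu_v})$. For a vertex colouring $\varphi$: $\varphi(V(G))$ is the set of colours used; $\varphi^{-1}(\alpha):=\{v\in V(G):\varphi(v)=\alpha\}$; $\varphi_{\mathcal{P}}(\mu):=\{\varphi(v):v\in V(P_\mu)\}$; $\varphi_{\mathcal{P}}^{-1}(A):=\{\mu\in\mathrm{VE}(G_k):A\cap\varphi_{\mathcal{P}}(\mu)\neq\emptyset\}$. *)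

theory Defs
  imports Complex_Main
begin

type_synonym gvert = "nat \<times> nat"

definition grid :: "nat \<Rightarrow> gvert set" where
  "grid k = {1..k} \<times> {1..k}"

definition gadj :: "gvert \<Rightarrow> gvert \<Rightarrow> bool" where
  "gadj v w \<longleftrightarrow> (let (i1,j1) = v; (i2,j2) = w in
      \<bar>int i1 - int i2\<bar> + \<bar>int j1 - int j2\<bar> = 1)"

definition gdeg :: "nat \<Rightarrow> gvert \<Rightarrow> nat" where
  "gdeg k v = card {w \<in> grid k. gadj v w}"

text \<open>Objects of VE(G_k): grid vertices and grid edges. A grid edge is stored
  once, oriented from (i,j) to its right/lower neighbour (i+1,j) or (i,j+1).\<close>
datatype gobj = GVert gvert | GEdge gvert gvert

definition fwd :: "gvert \<Rightarrow> gvert \<Rightarrow> bool" where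
  "fwd v w \<longleftrightarrow> w = (fst v + 1, snd v) \<or> w = (fst v, snd v + 1)"

definition VEsub :: "gvert set \<Rightarrow> gobj set" where
  "VEsub X = GVert ` X \<union> {GEdge v w | v w. v \<in> X \<and> w \<in> X \<and> fwd v w}"

definition VE :: "nat \<Rightarrow> gobj set" where
  "VE k = VEsub (grid k)"

definition intbox :: "nat \<Rightarrow> nat \<Rightarrow> gvert set" where
  "intbox k r = {1+r..k-r} \<times> {1+r..k-r}"

definition boxv :: "nat \<Rightarrow> nat \<Rightarrow> gvert \<Rightarrow> gvert set" where
  "boxv k r v = ({fst v - r..fst v + r} \<times> {snd v - r..snd v + r}) \<inter> grid k"

fun box :: "nat \<Rightarrow> nat \<Rightarrow> gobj \<Rightarrow> gvert set" where
  "box k r (GVert v) = boxv k r v"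
| "box k r (GEdge v w) = boxv k r v \<union> boxv k r w"

datatype pattern = Q1 | Q2 | Q3

text \<open>Grid neighbours of v attached to the first vertex p of the path P_v.\<close>
fun pside :: "pattern \<Rightarrow> gvert \<Rightarrow> gvert set" where
  "pside Q1 (i,j) = {(i-1,j), (i,j-1)}"
| "pside Q2 (i,j) = {(i,j+1), (i-1,j)}"
| "pside Q3 (i,j) = {(i-1,j), (i+1,j)}"

text \<open>The endpoint of P_v that is attached towards the grid neighbour w.\<close>
definition att :: "(gobj \<Rightarrow> nat list) \<Rightarrow> (gvert \<Rightarrow> pattern) \<Rightarrow> gvert \<Rightarrow> gvert \<Rightarrow> nat" where
  "att P pat v w = (if w \<in> pside (pat v) v then hd (P (GVert v)) else last (P (GVert v)))"

text \<open>The path of G playing the role of a grid object: P_v for vertices,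
  the full path (overline P_vw) for edges.\<close>
fun fullpath :: "(gobj \<Rightarrow> nat list) \<Rightarrow> (gvert \<Rightarrow> pattern) \<Rightarrow> gobj \<Rightarrow> nat list" where
  "fullpath P pat (GVert v) = P (GVert v)"
| "fullpath P pat (GEdge v w) = att P pat v w # P (GEdge v w) @ [att P pat w v]"

definition pathedges :: "nat list \<Rightarrow> nat set set" where
  "pathedges xs = {{xs ! i, xs ! (i+1)} | i. i + 1 < length xs}"

text \<open>(V,E) is a k x k pseudogrid with grid-partition given by the paths P mu
  (P (GEdge v w) is the internal path P_vw listed from v towards w) and
  attachment patterns pat.\<close>
definition pseudogrid ::
  "nat \<Rightarrow> nat set \<Rightarrow> nat set set \<Rightarrow> (gobj \<Rightarrow> nat list) \<Rightarrow> (gvert \<Rightarrow> pattern) \<Rightarrow> bool" where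
  "pseudogrid k V E P pat \<longleftrightarrow>
     (\<forall>\<mu>\<in>VE k. distinct (P \<mu>)) \<and>
     (\<forall>v\<in>grid k. P (GVert v) \<noteq> []) \<and>
     (\<forall>v\<in>grid k. gdeg k v < 4 \<longrightarrow> length (P (GVert v)) = 1) \<and>
     (\<forall>\<mu>\<in>VE k. \<forall>\<nu>\<in>VE k. \<mu> \<noteq> \<nu> \<longrightarrow> set (P \<mu>) \<inter> set (P \<nu>) = {}) \<and>
     V = (\<Union>\<mu>\<in>VE k. set (P \<mu>)) \<and>
     E = (\<Union>\<mu>\<in>VE k. pathedges (fullpath P pat \<mu>))"

definition intG :: "nat \<Rightarrow> nat \<Rightarrow> (gobj \<Rightarrow> nat list) \<Rightarrow> nat set" where
  "intG k r P = (\<Union>\<mu>\<in>VEsub (intbox k r). set (P \<mu>))"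

definition tboxo :: "nat \<Rightarrow> nat \<Rightarrow> (gobj \<Rightarrow> nat list) \<Rightarrow> gobj \<Rightarrow> nat set" where
  "tboxo k r P \<mu> = (\<Union>\<nu>\<in>VEsub (box k r \<mu>). set (P \<nu>))"

definition tbox :: "nat \<Rightarrow> nat \<Rightarrow> (gobj \<Rightarrow> nat list) \<Rightarrow> nat \<Rightarrow> nat set" where
  "tbox k r P x = tboxo k r P (THE \<mu>. \<mu> \<in> VE k \<and> x \<in> set (P \<mu>))"

definition colpre :: "nat \<Rightarrow> (gobj \<Rightarrow> nat list) \<Rightarrow> (nat \<Rightarrow> 'c) \<Rightarrow> 'c set \<Rightarrow> gobj set" where
  "colpre k P \<phi> A = {\<mu> \<in> VE k. A \<inter> \<phi> ` set (P \<mu>) \<noteq> {}}"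

end

theory Submission
  imports Defs "HOL-Library.FuncSet"
begin

text \<open>By Hall's theorem, the hypothesis with \<open>d = 96 (2r+3)\<^sup>2\<close> assigns to every colour
  \<open>\<alpha>\<close> two blocks \<open>(\<alpha>, 0)\<close>, \<open>(\<alpha>, 1)\<close> of \<open>h = 48 (2r+3)\<^sup>2\<close> objects of
  \<open>int\<^sub>r(G\<^sub>k)\<close>, all distinct and each containing a vertex of colour \<open>\<alpha>\<close>. Call two objects
  in conflict if one lies in the \<open>r\<close>-box of the other; an object conflicts with at most
  \<open>M = 3 (2r+3)\<^sup>2\<close> objects, and \<open>h = 16 M\<close>. A counting form of the symmetric Lovasz Local
  Lemma then picks one object from every block, no two picks in conflict. A vertex of colour
  \<open>\<alpha>\<close> in each of the two objects picked for \<open>\<alpha>\<close> gives \<open>S\<close>, and the box around any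
  \<open>v \<in> S\<close> meets \<open>S\<close> only in \<open>v\<close>.\<close>

lemma SDR_extend_by_element:
  assumes "i \<in> I" "x \<in> S i"
    and "inj_on g (I - {i})" "\<forall>j\<in>I - {i}. g j \<in> S j - {x}"
  shows "\<exists>g. inj_on g I \<and> (\<forall>j\<in>I. g j \<in> S j)"
proof (intro exI conjI)
  have "inj_on (g(i := x)) (I - {i})" using assms(3) by (simp add: inj_on_def)
  moreover have "x \<notin> (g(i := x)) ` (I - {i})" using assms(4) by auto
  ultimately have "inj_on (g(i := x)) (insert i (I - {i}))"
    using inj_on_insert[of "g(i := x)" i "I - {i}"] by simp
  then show "inj_on (g(i := x)) I" by (simp only: insert_Diff[OF assms(1)])
  show "\<forall>j\<in>I. (g(i := x)) j \<in> S j" using assms(2,4) by auto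
qed

lemma SDR_extend_by_family:
  assumes "J \<subseteq> I"
    and g1: "inj_on g1 J" "\<forall>j\<in>J. g1 j \<in> S j"
    and g2: "inj_on g2 (I - J)" "\<forall>j\<in>I - J. g2 j \<in> S j - \<Union>(S ` J)"
  shows "\<exists>g. inj_on g I \<and> (\<forall>j\<in>I. g j \<in> S j)"
proof (intro exI conjI)
  let ?g = "\<lambda>j. if j \<in> J then g1 j else g2 j"
  have side: "?g a \<in> \<Union>(S ` J) \<longleftrightarrow> a \<in> J" if "a \<in> I" for a
    using that g1(2) g2(2) by auto
  show "inj_on ?g I"
  proof (rule inj_onI)
    fix a b assume ab: "a \<in> I" "b \<in> I" "?g a = ?g b"
    then have "a \<in> J \<longleftrightarrow> b \<in> J" using side by metis
    then show "a = b"
      using ab inj_onD[OF g1(1), of a b] inj_onD[OF g2(1), of a b] by (cases "a \<in> J") auto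
  qed
  show "\<forall>j\<in>I. ?g j \<in> S j" using g1(2) g2(2) by auto
qed

lemma Hall_condition_remove_element:
  assumes "finite I" "\<forall>i\<in>I. finite (S i)"
    and surplus: "\<forall>J\<subseteq>I. J \<noteq> {} \<longrightarrow> J \<noteq> I \<longrightarrow> card J < card (\<Union>(S ` J))"
    and "i \<in> I"
  shows "\<forall>J\<subseteq>I - {i}. card J \<le> card (\<Union>j\<in>J. S j - {x})"
proof (intro allI impI)
  fix J assume J: "J \<subseteq> I - {i}"
  show "card J \<le> card (\<Union>j\<in>J. S j - {x})"
  proof (cases "J = {}")
    case False
    have "finite (\<Union>(S ` J))" using J assms(1,2) by (meson Diff_subset finite_UN_I finite_subset subsetD)
    then have "card (\<Union>(S ` J)) \<le> card (\<Union>(S ` J) - {x}) + 1"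
      by (cases "x \<in> \<Union>(S ` J)") (simp_all add: card_Suc_Diff1)
    moreover have "card J < card (\<Union>(S ` J))" using surplus[rule_format, of J] J False assms(4) by blast
    moreover have "(\<Union>j\<in>J. S j - {x}) = \<Union>(S ` J) - {x}" by blast
    ultimately show ?thesis by simp
  qed simp
qed

lemma Hall_condition_remove_tight:
  assumes "finite I" "\<forall>i\<in>I. finite (S i)"
    and hall: "\<forall>J\<subseteq>I. card J \<le> card (\<Union>(S ` J))"
    and "J \<subseteq> I" and tight: "card (\<Union>(S ` J)) \<le> card J"
  shows "\<forall>L\<subseteq>I - J. card L \<le> card (\<Union>i\<in>L. S i - \<Union>(S ` J))"
proof (intro allI impI)
  fix L assume L: "L \<subseteq> I - J"
  let ?A = "\<Union>i\<in>L. S i - \<Union>(S ` J)" and ?X = "\<Union>(S ` J)"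
  have fin: "finite L" "finite J" using finite_subset[OF L] finite_subset[OF assms(4)] assms(1) by auto
  have "finite ?A" "finite ?X" using L assms(2,4) fin by auto
  then have "card (\<Union>(S ` (L \<union> J))) \<le> card (?A \<union> ?X)" by (intro card_mono) blast+
  also have "\<dots> \<le> card ?A + card ?X" by (rule card_Un_le)
  finally have "card (\<Union>(S ` (L \<union> J))) \<le> card ?A + card ?X" .
  moreover have "card (L \<union> J) = card L + card J" using L fin by (subst card_Un_disjoint) auto
  moreover have "card (L \<union> J) \<le> card (\<Union>(S ` (L \<union> J)))" using hall[rule_format, of "L \<union> J"] L assms(4) by blast
  ultimately show "card L \<le> card ?A" using tight by linarith
qed

theorem Hall_marriage:
  assumes "finite I" "\<forall>i\<in>I. finite (S i)" "\<forall>J\<subseteq>I. card J \<le> card (\<Union>(S ` J))"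
  shows "\<exists>g. inj_on g I \<and> (\<forall>i\<in>I. g i \<in> S i)"
  using assms
proof (induction I arbitrary: S rule: finite_psubset_induct)
  case (psubset I)
  show ?case
  proof (cases "\<exists>J\<subseteq>I. J \<noteq> {} \<and> J \<noteq> I \<and> card (\<Union>(S ` J)) \<le> card J")
    case True
    then obtain J where J: "J \<subseteq> I" "J \<noteq> {}" "J \<noteq> I" and tight: "card (\<Union>(S ` J)) \<le> card J"
      by blast
    have "J \<subset> I" "I - J \<subset> I" using J by auto
    have "\<forall>j\<in>J. finite (S j)" using J(1) psubset.prems(1) by blast
    moreover have "\<forall>L\<subseteq>J. card L \<le> card (\<Union>(S ` L))" using J(1) psubset.prems(2) by (meson order_trans)
    ultimately obtain g1 where g1: "inj_on g1 J" "\<forall>j\<in>J. g1 j \<in> S j"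
      using psubset.IH[OF \<open>J \<subset> I\<close>] by blast
    have "\<forall>i\<in>I - J. finite (S i - \<Union>(S ` J))" using psubset.prems(1) by blast
    from psubset.IH[OF \<open>I - J \<subset> I\<close> this
        Hall_condition_remove_tight[OF psubset.hyps psubset.prems J(1) tight]]
    obtain g2 where g2: "inj_on g2 (I - J)" "\<forall>j\<in>I - J. g2 j \<in> S j - \<Union>(S ` J)"
      by blast
    show ?thesis using SDR_extend_by_family[OF J(1) g1 g2] .
  next
    case False
    then have surplus: "\<forall>J\<subseteq>I. J \<noteq> {} \<longrightarrow> J \<noteq> I \<longrightarrow> card J < card (\<Union>(S ` J))"
      by (meson not_le)
    show ?thesis
    proof (cases "I = {}")
      case False
      then obtain i where i: "i \<in> I" by blast
      then have "card {i} \<le> card (\<Union>(S ` {i}))" using psubset.prems(2) by blast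
      then obtain x where x: "x \<in> S i" by fastforce
      have "I - {i} \<subset> I" using i by auto
      have "\<forall>j\<in>I - {i}. finite (S j - {x})" using psubset.prems(1) by blast
      from psubset.IH[OF \<open>I - {i} \<subset> I\<close> this
          Hall_condition_remove_element[OF psubset.hyps psubset.prems(1) surplus i]]
      obtain g where "inj_on g (I - {i})" "\<forall>j\<in>I - {i}. g j \<in> S j - {x}"
        by blast
      then show ?thesis by (rule SDR_extend_by_element[where S = S, OF i x])
    qed simp
  qed
qed

lemma Hall_multiple_representatives:
  assumes "finite K" "\<forall>\<alpha>\<in>K. finite (R \<alpha>)" and hall: "\<forall>A\<subseteq>K. m * card A \<le> card (\<Union>(R ` A))"
  shows "\<exists>g. inj_on g (K \<times> {..<m}) \<and> (\<forall>t\<in>K \<times> {..<m}. g t \<in> R (fst t))"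
proof (rule Hall_marriage)
  show "finite (K \<times> {..<m})" using assms(1) by simp
  show "\<forall>t\<in>K \<times> {..<m}. finite (R (fst t))" using assms(2) by auto
  show "\<forall>J\<subseteq>K \<times> {..<m}. card J \<le> card (\<Union>t\<in>J. R (fst t))"
  proof (intro allI impI)
    fix J assume J: "J \<subseteq> K \<times> {..<m}"
    then have "fst ` J \<subseteq> K" by auto
    have "J \<subseteq> fst ` J \<times> {..<m}" using J by force
    then have "card J \<le> m * card (fst ` J)"
      using card_mono[of "fst ` J \<times> {..<m}" J] finite_subset[OF \<open>fst ` J \<subseteq> K\<close>] assms(1)
      by (simp add: card_cartesian_product mult.commute)
    also have "\<dots> \<le> card (\<Union>(R ` fst ` J))" using hall \<open>fst ` J \<subseteq> K\<close> by blast
    finally show "card J \<le> card (\<Union>t\<in>J. R (fst t))" by (simp add: image_image)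
  qed
qed

text \<open>Block \<open>c\<close> consists of the vertices \<open>(c, i)\<close> with \<open>i < h\<close>; a choice
  \<open>f \<in> I \<rightarrow>\<^sub>E {..<h}\<close> picks \<open>(c, f c)\<close> from every block. Probabilities over uniformly
  random choices are replaced by cardinalities of sets of choices.\<close>

locale conflict_blocks =
  fixes I :: "'i set" and h :: nat and conflict :: "'i \<times> nat \<Rightarrow> 'i \<times> nat \<Rightarrow> bool"
  assumes finite_blocks: "finite I"
    and conflict_sym: "conflict x y \<Longrightarrow> conflict y x"
begin

abbreviation vertices :: "('i \<times> nat) set" where
  "vertices \<equiv> I \<times> {..<h}"

definition conflict_edges :: "(('i \<times> nat) \<times> ('i \<times> nat)) set" where
  "conflict_edges = {(x, y). x \<in> vertices \<and> y \<in> vertices \<and> fst x \<noteq> fst y \<and> conflict x y}"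

definition blocks_of :: "('i \<times> nat) \<times> ('i \<times> nat) \<Rightarrow> 'i set" where
  "blocks_of e = {fst (fst e), fst (snd e)}"

definition selects :: "('i \<Rightarrow> nat) \<Rightarrow> ('i \<times> nat) \<times> ('i \<times> nat) \<Rightarrow> bool" where
  "selects f e \<longleftrightarrow> f (fst (fst e)) = snd (fst e) \<and> f (fst (snd e)) = snd (snd e)"

definition avoiding :: "(('i \<times> nat) \<times> ('i \<times> nat)) set \<Rightarrow> ('i \<Rightarrow> nat) set" where
  "avoiding S = {f \<in> I \<rightarrow>\<^sub>E {..<h}. \<forall>e\<in>S. \<not> selects f e}"

lemma finite_conflict_edges: "finite conflict_edges"
proof (rule finite_subset)
  show "conflict_edges \<subseteq> vertices \<times> vertices" by (auto simp: conflict_edges_def)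
qed (simp add: finite_blocks)

lemma finite_avoiding: "finite (avoiding S)"
  unfolding avoiding_def using finite_blocks by (simp add: finite_PiE)

lemma avoiding_antimono: "S \<subseteq> T \<Longrightarrow> avoiding T \<subseteq> avoiding S"
  unfolding avoiding_def by blast

lemma avoiding_insert: "avoiding (insert e S) = avoiding S - {f. selects f e}"
  unfolding avoiding_def by blast

lemma avoiding_update:
  assumes "f \<in> avoiding S" and "\<forall>e\<in>S. c \<notin> blocks_of e \<and> c' \<notin> blocks_of e"
    and "c \<in> I" "c' \<in> I" "a < h" "b < h"
  shows "f(c := a, c' := b) \<in> avoiding S"
proof -
  have "selects (f(c := a, c' := b)) e = selects f e" if "e \<in> S" for e
    using assms(2) that by (auto simp: selects_def blocks_of_def)
  then show ?thesis using assms(1,3-6) by (auto simp: avoiding_def PiE_def Pi_def extensional_def)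
qed

text \<open>Selecting a conflict edge is independent of avoiding edges on other blocks: every
  choice avoiding those edges can be redirected on the two blocks of the edge in exactly
  \<open>h * h\<close> ways.\<close>

lemma card_avoiding_independent:
  assumes e: "e \<in> conflict_edges" and S: "\<forall>e'\<in>S. blocks_of e' \<inter> blocks_of e = {}"
  shows "h * h * card {f \<in> avoiding S. selects f e} = card (avoiding S)"
proof -
  obtain c a c' b where e_eq: "e = ((c, a), (c', b))" by (metis prod.collapse)
  have cc': "c \<in> I" "c' \<in> I" "c \<noteq> c'" "a < h" "b < h"
    using e by (auto simp: conflict_edges_def e_eq)
  have free: "\<forall>e'\<in>S. c \<notin> blocks_of e' \<and> c' \<notin> blocks_of e'"
    using S by (auto simp: blocks_of_def e_eq)
  define F where "F f = (f c, f c', f(c := a, c' := b))" for f :: "'i \<Rightarrow> nat"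
  define G where "G p = (snd (snd p))(c := fst p, c' := fst (snd p))" for p :: "nat \<times> nat \<times> ('i \<Rightarrow> nat)"
  have "bij_betw F (avoiding S) ({..<h} \<times> {..<h} \<times> {f \<in> avoiding S. selects f e})"
  proof (rule bij_betw_byWitness[where f' = G])
    show "\<forall>f\<in>avoiding S. G (F f) = f" using cc' by (auto simp: F_def G_def)
    show "\<forall>p\<in>{..<h} \<times> {..<h} \<times> {f \<in> avoiding S. selects f e}. F (G p) = p"
      using cc' by (auto simp: F_def G_def selects_def e_eq intro!: ext)
    show "F ` avoiding S \<subseteq> {..<h} \<times> {..<h} \<times> {f \<in> avoiding S. selects f e}"
    proof
      fix p assume "p \<in> F ` avoiding S"
      then obtain f where f: "f \<in> avoiding S" "p = F f" by blast
      have "f c < h" "f c' < h" using f(1) cc'(1,2) by (auto simp: avoiding_def)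
      moreover have "f(c := a, c' := b) \<in> avoiding S" by (rule avoiding_update[OF f(1) free cc'(1,2,4,5)])
      moreover have "selects (f(c := a, c' := b)) e" using cc'(3) by (simp add: selects_def e_eq)
      ultimately show "p \<in> {..<h} \<times> {..<h} \<times> {f \<in> avoiding S. selects f e}" by (simp add: f(2) F_def)
    qed
    show "G ` ({..<h} \<times> {..<h} \<times> {f \<in> avoiding S. selects f e}) \<subseteq> avoiding S"
      using avoiding_update[OF _ free cc'(1,2)] by (auto simp: G_def)
  qed
  then show ?thesis by (simp add: bij_betw_same_card card_cartesian_product)
qed

lemma swap_conflict_edge: "e \<in> conflict_edges \<Longrightarrow> prod.swap e \<in> conflict_edges"
  by (auto simp: conflict_edges_def intro: conflict_sym)

lemma card_selecting_union_bound:
  assumes "finite S'"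
  shows "card (avoiding S) \<le> card (avoiding (S \<union> S')) + (\<Sum>e\<in>S'. card {f \<in> avoiding S. selects f e})"
proof -
  have "avoiding S \<subseteq> avoiding (S \<union> S') \<union> (\<Union>e\<in>S'. {f \<in> avoiding S. selects f e})"
    unfolding avoiding_def by blast
  then have "card (avoiding S) \<le> card (avoiding (S \<union> S') \<union> (\<Union>e\<in>S'. {f \<in> avoiding S. selects f e}))"
    using assms finite_avoiding by (intro card_mono) auto
  also have "\<dots> \<le> card (avoiding (S \<union> S')) + card (\<Union>e\<in>S'. {f \<in> avoiding S. selects f e})"
    by (rule card_Un_le)
  also have "card (\<Union>e\<in>S'. {f \<in> avoiding S. selects f e}) \<le> (\<Sum>e\<in>S'. card {f \<in> avoiding S. selects f e})"
    using assms by (rule card_UN_le)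
  finally show ?thesis by simp
qed

end

locale sparse_conflict_blocks = conflict_blocks +
  fixes M :: nat
  assumes conflict_degree: "x \<in> vertices \<Longrightarrow> card {y \<in> vertices. conflict x y} \<le> M"
    and sparse: "16 * M \<le> h"
    and nonempty_blocks: "0 < h"
begin

lemma card_conflict_edges_from_block:
  assumes "c \<in> I"
  shows "card {e \<in> conflict_edges. fst (fst e) = c} \<le> h * M"
proof -
  let ?N = "\<lambda>x. {y \<in> vertices. conflict x y}"
  have fin: "finite (Sigma ({c} \<times> {..<h}) ?N)" using finite_blocks by auto
  have "{e \<in> conflict_edges. fst (fst e) = c} \<subseteq> Sigma ({c} \<times> {..<h}) ?N"
    by (auto simp: conflict_edges_def)
  then have "card {e \<in> conflict_edges. fst (fst e) = c} \<le> card (Sigma ({c} \<times> {..<h}) ?N)"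
    using fin by (rule card_mono[rotated])
  also have "\<dots> = (\<Sum>x\<in>{c} \<times> {..<h}. card (?N x))" using finite_blocks by (simp add: card_SigmaI)
  also have "\<dots> \<le> (\<Sum>x\<in>{c} \<times> {..<h}. M)" using assms by (intro sum_mono conflict_degree) auto
  finally show ?thesis by (simp add: card_cartesian_product)
qed

lemma card_conflict_edges_at_block:
  assumes "c \<in> I"
  shows "card {e \<in> conflict_edges. c \<in> blocks_of e} \<le> 2 * h * M"
proof -
  let ?A = "{e \<in> conflict_edges. fst (fst e) = c}" and ?B = "{e \<in> conflict_edges. fst (snd e) = c}"
  have fin: "finite ?A" using finite_conflict_edges by simp
  have "?B \<subseteq> prod.swap ` ?A"
  proof
    fix e assume "e \<in> ?B"
    then have "prod.swap e \<in> ?A" using swap_conflict_edge[of e] by simp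
    then show "e \<in> prod.swap ` ?A" using image_eqI[of e prod.swap "prod.swap e"] by simp
  qed
  then have "card ?B \<le> card (prod.swap ` ?A)" using fin by (intro card_mono) auto
  also have "\<dots> \<le> card ?A" using fin by (rule card_image_le)
  finally have B: "card ?B \<le> card ?A" .
  have "{e \<in> conflict_edges. c \<in> blocks_of e} = ?A \<union> ?B" unfolding blocks_of_def by blast
  then have "card {e \<in> conflict_edges. c \<in> blocks_of e} \<le> card ?A + card ?B"
    using card_Un_le[of ?A ?B] by simp
  then show ?thesis using B card_conflict_edges_from_block[OF assms] by simp
qed

lemma card_dependent_conflict_edges:
  assumes "e \<in> conflict_edges"
  shows "card {e' \<in> conflict_edges. blocks_of e' \<inter> blocks_of e \<noteq> {}} \<le> 4 * h * M"
proof -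
  have blocks: "blocks_of e \<subseteq> I" "finite (blocks_of e)" "card (blocks_of e) \<le> 2"
    using assms by (auto simp: blocks_of_def conflict_edges_def card_insert_le_m1)
  have "{e' \<in> conflict_edges. blocks_of e' \<inter> blocks_of e \<noteq> {}}
      = (\<Union>c\<in>blocks_of e. {e' \<in> conflict_edges. c \<in> blocks_of e'})" by blast
  then have "card {e' \<in> conflict_edges. blocks_of e' \<inter> blocks_of e \<noteq> {}}
      \<le> (\<Sum>c\<in>blocks_of e. card {e' \<in> conflict_edges. c \<in> blocks_of e'})"
    using card_UN_le[OF blocks(2)] by simp
  also have "\<dots> \<le> (\<Sum>c\<in>blocks_of e. 2 * h * M)"
    using blocks(1) by (intro sum_mono card_conflict_edges_at_block) auto
  also have "\<dots> \<le> 2 * (2 * h * M)" using blocks(3) by simp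
  finally show ?thesis by simp
qed

lemma card_avoiding_le_twice:
  assumes "finite S'" "card S' \<le> 4 * h * M"
    and IH: "\<forall>e\<in>S'. h * h * card {f \<in> avoiding S. selects f e} \<le> 2 * card (avoiding S)"
  shows "card (avoiding S) \<le> 2 * card (avoiding (S \<union> S'))"
proof -
  define X where "X = card (avoiding S)"
  define Y where "Y = card (avoiding (S \<union> S'))"
  define Z where "Z = (\<Sum>e\<in>S'. card {f \<in> avoiding S. selects f e})"
  have "X \<le> Y + Z" unfolding X_def Y_def Z_def using assms(1) by (rule card_selecting_union_bound)
  then have "h * h * X \<le> h * h * Y + h * h * Z" by (metis add_mult_distrib2 mult_le_mono2)
  moreover have "h * h * Z \<le> card S' * (2 * X)"
    unfolding Z_def X_def sum_distrib_left using IH sum_mono[of S' _ "\<lambda>_. 2 * card (avoiding S)"] by simp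
  also have "\<dots> \<le> 4 * h * M * (2 * X)" using assms(2) by (rule mult_le_mono1)
  also have "\<dots> = 8 * (h * M * X)" by simp
  moreover have "16 * (h * M * X) \<le> h * h * X"
    using mult_le_mono1[OF sparse, of "h * X"] by (simp add: mult_ac)
  ultimately have "h * h * X \<le> 2 * (h * h * Y)" by linarith
  then have "h * h * X \<le> h * h * (2 * Y)" by (simp add: mult_ac)
  then show ?thesis using nonempty_blocks unfolding X_def Y_def by simp
qed

text \<open>Conditioned on avoiding the edges of \<open>S\<close>, a further conflict edge is selected
  with probability at most \<open>2 / h\<^sup>2\<close>: the symmetric local lemma, in counting form.\<close>

lemma card_selecting_avoiding_le:
  assumes "S \<subseteq> conflict_edges" "e \<in> conflict_edges - S"
  shows "h * h * card {f \<in> avoiding S. selects f e} \<le> 2 * card (avoiding S)"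
proof -
  have "finite S" using assms(1) finite_conflict_edges finite_subset by blast
  then show ?thesis using assms
  proof (induction S arbitrary: e rule: finite_psubset_induct)
    case (psubset S)
    define S1 where "S1 = {e' \<in> S. blocks_of e' \<inter> blocks_of e \<noteq> {}}"
    define S2 where "S2 = S - S1"
    have S_split: "S = S2 \<union> S1" and "S1 \<subseteq> S" unfolding S1_def S2_def by auto
    have "h * h * card {f \<in> avoiding S. selects f e} \<le> h * h * card {f \<in> avoiding S2. selects f e}"
      using avoiding_antimono[of S2 S] finite_avoiding[of S2] unfolding S2_def
      by (intro mult_le_mono2 card_mono) auto
    also have "\<dots> = card (avoiding S2)"
      using psubset.prems(2) by (intro card_avoiding_independent) (auto simp: S1_def S2_def)
    also have "\<dots> \<le> 2 * card (avoiding S)"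
    proof (cases "S1 = {}")
      case False
      then have "S2 \<subset> S" unfolding S2_def S1_def by blast
      have "finite S1" using \<open>finite S\<close> \<open>S1 \<subseteq> S\<close> finite_subset by blast
      moreover have "S1 \<subseteq> {e' \<in> conflict_edges. blocks_of e' \<inter> blocks_of e \<noteq> {}}"
        using psubset.prems(1) unfolding S1_def by blast
      then have "card S1 \<le> card {e' \<in> conflict_edges. blocks_of e' \<inter> blocks_of e \<noteq> {}}"
        using finite_conflict_edges by (intro card_mono) auto
      then have "card S1 \<le> 4 * h * M"
        using card_dependent_conflict_edges[of e] psubset.prems(2) by simp
      moreover have "\<forall>e'\<in>S1. h * h * card {f \<in> avoiding S2. selects f e'} \<le> 2 * card (avoiding S2)"
        using psubset.IH[OF \<open>S2 \<subset> S\<close>] psubset.prems(1) \<open>S1 \<subseteq> S\<close> unfolding S2_def by blast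
      ultimately have "card (avoiding S2) \<le> 2 * card (avoiding (S2 \<union> S1))"
        by (rule card_avoiding_le_twice)
      then show ?thesis using S_split by simp
    qed (simp add: S2_def)
    finally show ?case .
  qed
qed

lemma avoiding_nonempty:
  assumes "S \<subseteq> conflict_edges"
  shows "avoiding S \<noteq> {}"
proof -
  have "finite S" using assms finite_conflict_edges finite_subset by blast
  then show ?thesis using assms
  proof (induction S rule: finite_induct)
    case empty
    have "(\<lambda>i\<in>I. 0) \<in> avoiding {}" using nonempty_blocks by (auto simp: avoiding_def)
    then show ?case by blast
  next
    case (insert e S)
    then have e: "e \<in> conflict_edges - S" and S: "S \<subseteq> conflict_edges" by auto
    then obtain x y where xy: "(x, y) = e" "x \<in> vertices" "y \<in> vertices" "conflict x y"
      by (auto simp: conflict_edges_def)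
    have "finite {y \<in> vertices. conflict x y}" using finite_blocks by simp
    moreover have "y \<in> {y \<in> vertices. conflict x y}" using xy by simp
    ultimately have "0 < card {y \<in> vertices. conflict x y}" by (auto simp: card_gt_0_iff)
    then have "16 \<le> h" using conflict_degree[OF xy(2)] sparse by linarith
    then have "4 * 1 \<le> h * h" using mult_le_mono[of 4 h 1 h] by simp
    then have "4 * card {f \<in> avoiding S. selects f e} \<le> h * h * card {f \<in> avoiding S. selects f e}"
      by (intro mult_le_mono1) simp
    also have "\<dots> \<le> 2 * card (avoiding S)" using card_selecting_avoiding_le[OF S e] .
    moreover have "0 < card (avoiding S)" using insert.IH S finite_avoiding[of S] by (simp add: card_gt_0_iff)
    ultimately have "card {f \<in> avoiding S. selects f e} < card (avoiding S)" by linarith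
    show ?case unfolding avoiding_insert
    proof
      assume "avoiding S - {f. selects f e} = {}"
      then have "{f \<in> avoiding S. selects f e} = avoiding S" by blast
      with \<open>card {f \<in> avoiding S. selects f e} < card (avoiding S)\<close> show False by simp
    qed
  qed
qed

theorem independent_transversal:
  "\<exists>f\<in>I \<rightarrow>\<^sub>E {..<h}. \<forall>c\<in>I. \<forall>c'\<in>I. c \<noteq> c' \<longrightarrow> \<not> conflict (c, f c) (c', f c')"
proof -
  obtain f where f: "f \<in> avoiding conflict_edges" using avoiding_nonempty[of conflict_edges] by blast
  then have f_choice: "f \<in> I \<rightarrow>\<^sub>E {..<h}" by (simp add: avoiding_def)
  have "\<not> conflict (c, f c) (c', f c')" if "c \<in> I" "c' \<in> I" "c \<noteq> c'" for c c'
  proof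
    assume "conflict (c, f c) (c', f c')"
    then have "((c, f c), (c', f c')) \<in> conflict_edges"
      using that f_choice by (auto simp: conflict_edges_def)
    then show False using f by (auto simp: avoiding_def selects_def)
  qed
  then show ?thesis using f_choice by blast
qed

end

fun anchor :: "gobj \<Rightarrow> gvert" where
  "anchor (GVert v) = v"
| "anchor (GEdge v w) = v"

definition objects_at :: "gvert set \<Rightarrow> gobj set" where
  "objects_at X = GVert ` X \<union> (\<lambda>v. GEdge v (fst v + 1, snd v)) ` X \<union> (\<lambda>v. GEdge v (fst v, snd v + 1)) ` X"

definition square :: "gvert \<Rightarrow> nat \<Rightarrow> gvert set" where
  "square p R = {fst p - R..fst p + R} \<times> {snd p - R..snd p + R}"

definition box_conflict :: "nat \<Rightarrow> nat \<Rightarrow> gobj \<Rightarrow> gobj \<Rightarrow> bool" where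
  "box_conflict k r \<mu> \<nu> \<longleftrightarrow> \<nu> \<in> VEsub (box k r \<mu>) \<or> \<mu> \<in> VEsub (box k r \<nu>)"

lemma anchor_VEsub: "\<nu> \<in> VEsub X \<Longrightarrow> anchor \<nu> \<in> X"
  unfolding VEsub_def by auto

lemma mem_objects_at: "\<nu> \<in> VEsub X \<Longrightarrow> anchor \<nu> \<in> Y \<Longrightarrow> \<nu> \<in> objects_at Y"
  unfolding VEsub_def objects_at_def fwd_def by auto

lemma VEsub_subset_objects_at: "VEsub X \<subseteq> objects_at X"
  using mem_objects_at anchor_VEsub by blast

lemma VEsub_mono: "X \<subseteq> Y \<Longrightarrow> VEsub X \<subseteq> VEsub Y"
  unfolding VEsub_def by blast

lemma card_objects_at:
  assumes "finite X"
  shows "card (objects_at X) \<le> 3 * card X"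
proof -
  let ?R = "(\<lambda>v. GEdge v (fst v + 1, snd v)) ` X" and ?D = "(\<lambda>v. GEdge v (fst v, snd v + 1)) ` X"
  have "card (objects_at X) \<le> card (GVert ` X) + card ?R + card ?D"
    unfolding objects_at_def by (meson add_le_mono card_Un_le le_refl order_trans)
  also have "\<dots> \<le> card X + card X + card X"
    using card_image_le[OF assms] by (meson add_le_mono)
  finally show ?thesis by simp
qed

lemma card_square_le: "card (square p R) \<le> (2 * R + 1) ^ 2"
proof -
  have "card (square p R) = card {fst p - R..fst p + R} * card {snd p - R..snd p + R}"
    unfolding square_def by (simp add: card_cartesian_product)
  also have "\<dots> \<le> (2 * R + 1) * (2 * R + 1)" by (intro mult_le_mono) auto
  finally show ?thesis by (simp add: power2_eq_square)
qed

lemma finite_VE: "finite (VE k)"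
proof (rule finite_subset)
  show "VE k \<subseteq> objects_at (grid k)" unfolding VE_def by (rule VEsub_subset_objects_at)
  show "finite (objects_at (grid k))" by (simp add: objects_at_def grid_def)
qed

lemma VEsub_box_subset_VE: "VEsub (box k r \<mu>) \<subseteq> VE k"
  unfolding VE_def by (rule VEsub_mono) (cases \<mu>, auto simp: boxv_def)

lemma VEsub_intbox_subset_VE: "VEsub (intbox k r) \<subseteq> VE k"
  unfolding VE_def by (rule VEsub_mono) (auto simp: intbox_def grid_def)

lemma box_conflict_refl: "\<mu> \<in> VE k \<Longrightarrow> box_conflict k r \<mu> \<mu>"
  by (cases \<mu>) (auto simp: box_conflict_def VE_def VEsub_def boxv_def grid_def)

lemma anchor_box:
  assumes "\<mu> \<in> VE k" "x \<in> box k r \<mu>"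
  shows "x \<in> square (anchor \<mu>) (r + 1)"
proof (cases \<mu>)
  case (GEdge v w)
  then have "fwd v w" using assms(1) unfolding VE_def VEsub_def by auto
  then show ?thesis using assms(2) GEdge by (auto simp: boxv_def fwd_def square_def)
qed (use assms in \<open>auto simp: boxv_def square_def\<close>)

lemma square_sym: "p \<in> square q R \<Longrightarrow> q \<in> square p R"
  unfolding square_def mem_Times_iff by auto

lemma anchor_box_conflict:
  assumes "\<mu> \<in> VE k" "\<nu> \<in> VE k" "box_conflict k r \<mu> \<nu>"
  shows "anchor \<nu> \<in> square (anchor \<mu>) (r + 1)"
  using assms(3) unfolding box_conflict_def
  by (metis anchor_VEsub anchor_box assms(1,2) square_sym)

lemma card_box_conflicts:
  assumes "\<mu> \<in> VE k"
  shows "card {\<nu> \<in> VE k. box_conflict k r \<mu> \<nu>} \<le> 3 * (2 * r + 3) ^ 2"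
proof -
  let ?Q = "square (anchor \<mu>) (r + 1)"
  have fin: "finite ?Q" by (simp add: square_def)
  have "{\<nu> \<in> VE k. box_conflict k r \<mu> \<nu>} \<subseteq> objects_at ?Q"
    using anchor_box_conflict[OF assms] mem_objects_at unfolding VE_def by blast
  then have "card {\<nu> \<in> VE k. box_conflict k r \<mu> \<nu>} \<le> card (objects_at ?Q)"
    using fin by (intro card_mono) (auto simp: objects_at_def)
  also have "\<dots> \<le> 3 * card ?Q" using fin by (rule card_objects_at)
  also have "\<dots> \<le> 3 * (2 * (r + 1) + 1) ^ 2" by (intro mult_le_mono2 card_square_le)
  finally show ?thesis by (simp add: numeral_eq_Suc)
qed

lemma pseudogrid_path_owner:
  assumes "pseudogrid k V E P pat" "\<mu> \<in> VE k" "\<nu> \<in> VE k" "y \<in> set (P \<mu>)" "y \<in> set (P \<nu>)"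
  shows "\<mu> = \<nu>"
  using assms unfolding pseudogrid_def by blast

lemma pseudogrid_tbox:
  assumes "pseudogrid k V E P pat" "\<mu> \<in> VE k" "y \<in> set (P \<mu>)"
  shows "tbox k r P y = tboxo k r P \<mu>"
proof -
  have "(THE \<nu>. \<nu> \<in> VE k \<and> y \<in> set (P \<nu>)) = \<mu>"
    using assms pseudogrid_path_owner[OF assms(1)] by (intro the_equality) auto
  then show ?thesis by (simp add: tbox_def)
qed

lemma finite_pseudogrid_vertices: "pseudogrid k V E P pat \<Longrightarrow> finite V"
  unfolding pseudogrid_def using finite_VE by auto

lemma colour_object_representatives:
  fixes \<phi> :: "nat \<Rightarrow> 'c"
  assumes "finite K" "Ob \<subseteq> VE k"
    and hall: "\<forall>A\<subseteq>K. 2 * h * card A \<le> card (colpre k P \<phi> A \<inter> Ob)"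
  shows "\<exists>g. inj_on g ((K \<times> {..<2::nat}) \<times> {..<h}) \<and>
    (\<forall>t\<in>(K \<times> {..<2::nat}) \<times> {..<h}. g t \<in> Ob \<and> fst (fst t) \<in> \<phi> ` set (P (g t)))"
proof -
  define R where "R c = {\<mu> \<in> Ob. fst c \<in> \<phi> ` set (P \<mu>)}" for c :: "'c \<times> nat"
  have "\<forall>A\<subseteq>K \<times> {..<2::nat}. h * card A \<le> card (\<Union>(R ` A))"
  proof (intro allI impI)
    fix A assume A: "A \<subseteq> K \<times> {..<2::nat}"
    then have "fst ` A \<subseteq> K" by auto
    have "A \<subseteq> fst ` A \<times> {..<2::nat}" using A by force
    then have "card A \<le> 2 * card (fst ` A)"
      using card_mono[of "fst ` A \<times> {..<2::nat}" A] finite_subset[OF \<open>fst ` A \<subseteq> K\<close>] assms(1)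
      by (simp add: card_cartesian_product)
    then have "h * card A \<le> 2 * h * card (fst ` A)" by (metis mult.assoc mult.commute mult_le_mono2)
    also have "\<dots> \<le> card (colpre k P \<phi> (fst ` A) \<inter> Ob)" using hall[rule_format, OF \<open>fst ` A \<subseteq> K\<close>] .
    also have "colpre k P \<phi> (fst ` A) \<inter> Ob = \<Union>(R ` A)"
      using assms(2) unfolding colpre_def R_def by blast
    finally show "h * card A \<le> card (\<Union>(R ` A))" .
  qed
  moreover have "finite (R c)" for c
    using assms(2) by (intro finite_subset[OF _ finite_VE]) (auto simp: R_def)
  ultimately obtain g where "inj_on g ((K \<times> {..<2::nat}) \<times> {..<h})"
    "\<forall>t\<in>(K \<times> {..<2::nat}) \<times> {..<h}. g t \<in> R (fst t)"
    using Hall_multiple_representatives[of "K \<times> {..<2::nat}" R h] assms(1) by auto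
  then show ?thesis unfolding R_def by blast
qed

text \<open>Block \<open>(\<alpha>, j)\<close> consists of the \<open>h\<close> objects that Hall's theorem assigns to the
  \<open>j\<close>-th copy of the colour \<open>\<alpha>\<close>.\<close>

lemma sparse_colour_objects:
  fixes \<phi> :: "nat \<Rightarrow> 'c"
  assumes "finite K" "Ob \<subseteq> VE k"
    and hall: "\<forall>A\<subseteq>K. 96 * (2 * r + 3) ^ 2 * card A \<le> card (colpre k P \<phi> A \<inter> Ob)"
  shows "\<exists>ob. (\<forall>c\<in>K \<times> {..<2::nat}. ob c \<in> Ob \<and> fst c \<in> \<phi> ` set (P (ob c))) \<and>
    (\<forall>c\<in>K \<times> {..<2::nat}. \<forall>c'\<in>K \<times> {..<2::nat}. c \<noteq> c' \<longrightarrow> \<not> box_conflict k r (ob c) (ob c'))"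
proof -
  define M where "M = 3 * (2 * r + 3) ^ 2"
  define h where "h = 16 * M"
  obtain g where g_inj: "inj_on g ((K \<times> {..<2::nat}) \<times> {..<h})"
    and g: "\<forall>t\<in>(K \<times> {..<2::nat}) \<times> {..<h}. g t \<in> Ob \<and> fst (fst t) \<in> \<phi> ` set (P (g t))"
    using colour_object_representatives[OF assms(1,2), of h P \<phi>] hall unfolding h_def M_def by auto
  interpret sparse_conflict_blocks "K \<times> {..<2::nat}" h "\<lambda>x y. box_conflict k r (g x) (g y)" M
  proof
    show "finite (K \<times> {..<2::nat})" using assms(1) by simp
    show "box_conflict k r (g x) (g y) \<Longrightarrow> box_conflict k r (g y) (g x)" for x y
      by (auto simp: box_conflict_def)
    fix x assume x: "x \<in> (K \<times> {..<2::nat}) \<times> {..<h}"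
    let ?C = "{y \<in> (K \<times> {..<2::nat}) \<times> {..<h}. box_conflict k r (g x) (g y)}"
    have "g ` ?C \<subseteq> {\<nu> \<in> VE k. box_conflict k r (g x) \<nu>}" using g assms(2) by auto
    then have "card (g ` ?C) \<le> card {\<nu> \<in> VE k. box_conflict k r (g x) \<nu>}"
      using finite_VE by (intro card_mono) auto
    moreover have "card (g ` ?C) = card ?C" using g_inj by (intro card_image) (auto intro: inj_on_subset)
    moreover have "g x \<in> VE k" using g x assms(2) by auto
    ultimately show "card ?C \<le> M" using card_box_conflicts[of "g x" k r] unfolding M_def by simp
  qed (simp_all add: h_def M_def)
  obtain f where f: "f \<in> K \<times> {..<2::nat} \<rightarrow>\<^sub>E {..<h}"
    and no_conflict: "\<forall>c\<in>K \<times> {..<2::nat}. \<forall>c'\<in>K \<times> {..<2::nat}. c \<noteq> c' \<longrightarrow> \<not> box_conflict k r (g (c, f c)) (g (c', f c'))"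
    using independent_transversal by blast
  have "(c, f c) \<in> (K \<times> {..<2::nat}) \<times> {..<h}" if "c \<in> K \<times> {..<2::nat}" for c
    using f that by auto
  then show ?thesis using g no_conflict by (intro exI[of _ "\<lambda>c. g (c, f c)"]) auto
qed

lemma pseudogrid_vertices: "pseudogrid k V E P pat \<Longrightarrow> V = (\<Union>\<mu>\<in>VE k. set (P \<mu>))"
  unfolding pseudogrid_def by blast

lemma card_colour_class_pair:
  assumes "\<forall>c\<in>A \<times> {..<2::nat}. x c \<in> V \<and> \<phi> (x c) = fst c" "inj_on x (A \<times> {..<2})" "\<alpha> \<in> A"
  shows "card ({y \<in> V. \<phi> y = \<alpha>} \<inter> x ` (A \<times> {..<2})) = 2"
proof -
  have pair: "(\<alpha>, 0) \<in> A \<times> {..<2::nat}" "(\<alpha>, 1) \<in> A \<times> {..<2::nat}" using assms(3) by auto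
  have "{y \<in> V. \<phi> y = \<alpha>} \<inter> x ` (A \<times> {..<2}) = x ` {(\<alpha>, 0), (\<alpha>, 1)}"
  proof
    show "{y \<in> V. \<phi> y = \<alpha>} \<inter> x ` (A \<times> {..<2}) \<subseteq> x ` {(\<alpha>, 0), (\<alpha>, 1)}"
    proof
      fix y assume y: "y \<in> {y \<in> V. \<phi> y = \<alpha>} \<inter> x ` (A \<times> {..<2})"
      then obtain c where c: "c \<in> A \<times> {..<2}" "y = x c" by blast
      then have "fst c = \<alpha>" "snd c < 2" using assms(1) y by auto
      then have "c \<in> {(\<alpha>, 0), (\<alpha>, 1)}" by (cases c) (auto simp: less_2_cases_iff)
      then show "y \<in> x ` {(\<alpha>, 0), (\<alpha>, 1)}" using c(2) by blast
    qed
    show "x ` {(\<alpha>, 0), (\<alpha>, 1)} \<subseteq> {y \<in> V. \<phi> y = \<alpha>} \<inter> x ` (A \<times> {..<2})"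
      using assms(1) pair by auto
  qed
  moreover have "x (\<alpha>, 0) \<noteq> x (\<alpha>, 1)"
  proof
    assume "x (\<alpha>, 0) = x (\<alpha>, 1)"
    then have "(\<alpha>, 0) = (\<alpha>, 1::nat)" using inj_onD[OF assms(2) _ pair] by blast
    then show False by simp
  qed
  ultimately show ?thesis by simp
qed

lemma sparse_vertex_selection:
  assumes pg: "pseudogrid k V E P pat"
    and ob: "\<forall>c\<in>\<phi> ` V \<times> {..<2::nat}. ob c \<in> VEsub (intbox k r) \<and> fst c \<in> \<phi> ` set (P (ob c))"
    and no_conflict: "\<forall>c\<in>\<phi> ` V \<times> {..<2::nat}. \<forall>c'\<in>\<phi> ` V \<times> {..<2::nat}. c \<noteq> c' \<longrightarrow> \<not> box_conflict k r (ob c) (ob c')"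
  shows "\<exists>S \<subseteq> intG k r P. (\<forall>\<alpha>\<in>\<phi> ` V. card ({x \<in> V. \<phi> x = \<alpha>} \<inter> S) = 2) \<and>
    (\<forall>v\<in>S. tbox k r P v \<inter> S \<subseteq> {v})"
proof -
  define I where "I = \<phi> ` V \<times> {..<2::nat}"
  have ob_VE: "ob c \<in> VE k" if "c \<in> I" for c
    using ob[rule_format, OF that[unfolded I_def]] VEsub_intbox_subset_VE by blast
  have "\<forall>c\<in>I. \<exists>y. y \<in> set (P (ob c)) \<and> \<phi> y = fst c"
    using ob unfolding I_def by (metis image_iff)
  then have "\<exists>x. \<forall>c\<in>I. x c \<in> set (P (ob c)) \<and> \<phi> (x c) = fst c" by (rule bchoice)
  then obtain x where x: "\<forall>c\<in>I. x c \<in> set (P (ob c)) \<and> \<phi> (x c) = fst c" ..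
  have x_eq: "c = c'" if "c \<in> I" "c' \<in> I" "x c \<in> set (P (ob c'))" for c c'
  proof (rule ccontr)
    assume "c \<noteq> c'"
    then have "\<not> box_conflict k r (ob c) (ob c')" using no_conflict that(1,2) unfolding I_def by blast
    moreover have "ob c = ob c'"
      using pseudogrid_path_owner[OF pg ob_VE[OF that(1)] ob_VE[OF that(2)]] x that by blast
    ultimately show False using box_conflict_refl[OF ob_VE[OF that(1)]] by simp
  qed
  have x_inj: "inj_on x (\<phi> ` V \<times> {..<2::nat})"
    using x x_eq unfolding I_def by (intro inj_onI) metis
  have x_V: "x c \<in> V \<and> \<phi> (x c) = fst c" if "c \<in> I" for c
    using pseudogrid_vertices[OF pg] x ob_VE[OF that] that by blast
  define S where "S = x ` I"
  have "S \<subseteq> intG k r P" using ob x unfolding S_def intG_def I_def by blast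
  moreover have "card ({y \<in> V. \<phi> y = \<alpha>} \<inter> S) = 2" if "\<alpha> \<in> \<phi> ` V" for \<alpha>
    using card_colour_class_pair[OF _ x_inj that] x_V unfolding S_def I_def by blast
  moreover have "tbox k r P v \<inter> S \<subseteq> {v}" if "v \<in> S" for v
  proof
    fix y assume y: "y \<in> tbox k r P v \<inter> S"
    obtain c where c: "c \<in> I" "v = x c" using \<open>v \<in> S\<close> unfolding S_def by blast
    obtain c' where c': "c' \<in> I" "y = x c'" using y unfolding S_def by blast
    have "tbox k r P v = tboxo k r P (ob c)" using pseudogrid_tbox[OF pg ob_VE[OF c(1)]] c x by blast
    then obtain \<nu> where \<nu>: "\<nu> \<in> VEsub (box k r (ob c))" "y \<in> set (P \<nu>)"
      using y unfolding tboxo_def by blast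
    then have "\<nu> = ob c'"
      using pseudogrid_path_owner[OF pg _ ob_VE[OF c'(1)]] VEsub_box_subset_VE x c' by blast
    then have "c = c'" using no_conflict \<nu>(1) c(1) c'(1) unfolding box_conflict_def I_def by blast
    then show "y \<in> {v}" using c c' by simp
  qed
  ultimately show ?thesis by blast
qed

lemma multiplicity_le_quartic_log:
  assumes "10 \<le> r"
  shows "real (96 * (2 * r + 3) ^ 2) \<le> 864 * real r ^ 4 * ln (real r)"
proof -
  have "1 \<le> ln (real r)"
    using assms exp_le by (subst ln_ge_iff) (auto intro: order_trans[of _ "exp 1"])
  have "real r ^ 2 \<le> real r ^ 4" using assms by (intro power_increasing) auto
  also have "\<dots> \<le> real r ^ 4 * ln (real r)"
    using assms \<open>1 \<le> ln (real r)\<close> by (simp add: mult_le_cancel_left1)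
  finally have r2_le: "real r ^ 2 \<le> real r ^ 4 * ln (real r)" .
  have "2 * real r + 3 \<le> 3 * real r" using assms by simp
  then have "(2 * real r + 3) ^ 2 \<le> (3 * real r) ^ 2" by (intro power_mono) auto
  then have "real (96 * (2 * r + 3) ^ 2) \<le> 864 * real r ^ 2" by (simp add: power_mult_distrib)
  also have "\<dots> \<le> 864 * (real r ^ 4 * ln (real r))" using r2_le by simp
  finally show ?thesis by (simp add: mult.assoc)
qed

lemma colour_pairs_sparse:
  fixes \<phi> :: "nat \<Rightarrow> 'c"
  assumes pg: "pseudogrid k V E P pat"
    and hall: "\<forall>A \<subseteq> \<phi> ` V. 96 * (2 * r + 3) ^ 2 * card A \<le> card (colpre k P \<phi> A \<inter> VEsub (intbox k r))"
  shows "\<exists>S \<subseteq> intG k r P. (\<forall>\<alpha>\<in>\<phi> ` V. card ({x \<in> V. \<phi> x = \<alpha>} \<inter> S) = 2) \<and>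
    (\<forall>v\<in>S. card (tbox k r P v \<inter> S) \<le> 2)"
proof -
  obtain ob where "\<forall>c\<in>\<phi> ` V \<times> {..<2::nat}. ob c \<in> VEsub (intbox k r) \<and> fst c \<in> \<phi> ` set (P (ob c))"
    "\<forall>c\<in>\<phi> ` V \<times> {..<2::nat}. \<forall>c'\<in>\<phi> ` V \<times> {..<2::nat}. c \<noteq> c' \<longrightarrow> \<not> box_conflict k r (ob c) (ob c')"
    using sparse_colour_objects[OF finite_imageI[OF finite_pseudogrid_vertices[OF pg]]
        VEsub_intbox_subset_VE hall] by blast
  from sparse_vertex_selection[OF pg this] obtain S where "S \<subseteq> intG k r P"
    "\<forall>\<alpha>\<in>\<phi> ` V. card ({x \<in> V. \<phi> x = \<alpha>} \<inter> S) = 2" and sparse: "\<forall>v\<in>S. tbox k r P v \<inter> S \<subseteq> {v}"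
    by blast
  moreover have "card (tbox k r P v \<inter> S) \<le> 2" if "v \<in> S" for v
    using card_mono[OF _ sparse[rule_format, OF that]] by simp
  ultimately show ?thesis by blast
qed

theorem lemma14:
  "\<exists>C::real. \<forall>r::nat. r \<ge> 10 \<longrightarrow>
     (\<exists>d::nat. real d \<le> C * real r ^ 4 * ln (real r) \<and>
       (\<forall>k::nat. \<forall>(V::nat set) (E::nat set set) (P::gobj \<Rightarrow> nat list) (pat::gvert \<Rightarrow> pattern)
            (\<phi>::nat \<Rightarrow> nat).
          k \<ge> 1 \<longrightarrow> pseudogrid k V E P pat \<longrightarrow>
          (\<forall>A \<subseteq> \<phi> ` V. card (colpre k P \<phi> A \<inter> VEsub (intbox k r)) \<ge> d * card A) \<longrightarrow>
          (\<exists>S \<subseteq> intG k r P.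
             (\<forall>\<alpha>\<in>\<phi> ` V. card ({x \<in> V. \<phi> x = \<alpha>} \<inter> S) = 2) \<and>
             (\<forall>v\<in>S. card (tbox k r P v \<inter> S) \<le> 2))))"
proof (rule exI[of _ "864::real"], intro allI impI)
  fix r :: nat
  assume "10 \<le> r"
  show "\<exists>d. real d \<le> 864 * real r ^ 4 * ln (real r) \<and>
    (\<forall>k V E P pat (\<phi> :: nat \<Rightarrow> nat). 1 \<le> k \<longrightarrow> pseudogrid k V E P pat \<longrightarrow>
      (\<forall>A\<subseteq>\<phi> ` V. d * card A \<le> card (colpre k P \<phi> A \<inter> VEsub (intbox k r))) \<longrightarrow>
      (\<exists>S\<subseteq>intG k r P. (\<forall>\<alpha>\<in>\<phi> ` V. card ({x \<in> V. \<phi> x = \<alpha>} \<inter> S) = 2) \<and>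
        (\<forall>v\<in>S. card (tbox k r P v \<inter> S) \<le> 2)))"
    by (intro exI[of _ "96 * (2 * r + 3) ^ 2"] conjI allI impI multiplicity_le_quartic_log \<open>10 \<le> r\<close>)
      (rule colour_pairs_sparse)
qed

end
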